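(* Let $G$ be a finite group and let $p,q$ be distinct primes that are non-adjacent in the codegree graph $\Gamma(G)$. Then it cannot happen that $G$ has a Hall $\{p,q\}$-subgroup $H_1$ which is either a Frobenius group whose kernel is its Sylow $q$-subgroup and whose complement is its Sylow $p$-subgroup, or a 2-Frobenius group of type $(p,q,p)$, and also a Hall $\{p,q\}$-subgroup $H_2$ which is either a Frobenius group whose kernel is its Sylow $p$-subgroup and whose complement is its Sylow $q$-subgroup, or a 2-Frobenius group of type $(q,p,q)$. Consequently, orienting the edge $pq$ of $\overline{\Gamma}(G)$ as $p\to q$ when some Hall $\{p,q\}$-subgroup is of the first kind gives an orientation independent of the choice of Hall $\{p,q\}$-subgroup.
   Context: For $\chi\in{\rm Irr}(G)$, ${\rm cod}(\chi)=|G:\ker\chi|/\chi(1)$; the codegree graph $\Gamma(G)$ has vertices the prime divisors of $|G|$, with distinct $p,q$ adjacent iff $pq$ divides some ${\rm cod}(\chi)$, and $\overline{\Gamma}(G)$ is its complement. It is known that if $p,q$ are non-adjacent in $\Gamma(G)$ then $G$ has a Hall $\{p,q\}$-subgroup and each such is a Frobenius group or a 2-Frobenius group. A Frobenius group is $N\rtimes K$ with $C_N(k)=1$ for all $1\ne k\in K$ (kernel $N$, complement $K$). A group $H$ is a 2-Frobenius group of type $(p,q,r)$ if it has normal subgroups $N\le M$ such that $M$ is a Frobenius group with kernel $N$, $H/N$ is a Frobenius group with kernel $M/N$, $N$ is a $p$-group, $M/N$ is a $q$-group and $H/M$ is an $r$-group. *)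

theory Defs
  imports "HOL-Algebra.Coset" "HOL-Algebra.Sylow" "Jordan_Normal_Form.Matrix"
    "HOL-Computational_Algebra.Primes"
begin

definition is_rep :: "('a, 'b) monoid_scheme \<Rightarrow> nat \<Rightarrow> ('a \<Rightarrow> complex mat) \<Rightarrow> bool" where
  "is_rep G n \<rho> \<longleftrightarrow> n \<ge> 1 \<and>
     (\<forall>g \<in> carrier G. \<rho> g \<in> carrier_mat n n) \<and>
     \<rho> \<one>\<^bsub>G\<^esub> = 1\<^sub>m n \<and>
     (\<forall>g \<in> carrier G. \<forall>h \<in> carrier G. \<rho> (g \<otimes>\<^bsub>G\<^esub> h) = \<rho> g * \<rho> h)"

definition subspace_cn :: "nat \<Rightarrow> complex vec set \<Rightarrow> bool" where
  "subspace_cn n W \<longleftrightarrow> W \<subseteq> carrier_vec n \<and> 0\<^sub>v n \<in> W \<and>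
     (\<forall>v \<in> W. \<forall>w \<in> W. v + w \<in> W) \<and> (\<forall>c. \<forall>v \<in> W. c \<cdot>\<^sub>v v \<in> W)"

definition irreducible_rep :: "('a, 'b) monoid_scheme \<Rightarrow> nat \<Rightarrow> ('a \<Rightarrow> complex mat) \<Rightarrow> bool" where
  "irreducible_rep G n \<rho> \<longleftrightarrow> is_rep G n \<rho> \<and>
     (\<forall>W. subspace_cn n W \<and> (\<forall>g \<in> carrier G. \<forall>v \<in> W. \<rho> g *\<^sub>v v \<in> W)
          \<longrightarrow> W = {0\<^sub>v n} \<or> W = carrier_vec n)"

definition mat_trace :: "complex mat \<Rightarrow> complex" where
  "mat_trace A = (\<Sum>i<dim_row A. A $$ (i, i))"

definition Irr :: "('a, 'b) monoid_scheme \<Rightarrow> ('a \<Rightarrow> complex) set" where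
  "Irr G = {\<chi>. \<exists>n \<rho>. irreducible_rep G n \<rho> \<and>
                 \<chi> = (\<lambda>g. if g \<in> carrier G then mat_trace (\<rho> g) else 0)}"

definition char_ker :: "('a, 'b) monoid_scheme \<Rightarrow> ('a \<Rightarrow> complex) \<Rightarrow> 'a set" where
  "char_ker G \<chi> = {g \<in> carrier G. \<chi> g = \<chi> \<one>\<^bsub>G\<^esub>}"

definition cod :: "('a, 'b) monoid_scheme \<Rightarrow> ('a \<Rightarrow> complex) \<Rightarrow> complex" where
  "cod G \<chi> = of_nat (card (carrier G) div card (char_ker G \<chi>)) / \<chi> \<one>\<^bsub>G\<^esub>"

definition codegree_adjacent :: "('a, 'b) monoid_scheme \<Rightarrow> nat \<Rightarrow> nat \<Rightarrow> bool" where
  "codegree_adjacent G p q \<longleftrightarrow>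
     (\<exists>\<chi> \<in> Irr G. \<exists>k::nat. cod G \<chi> = of_nat (p * q * k))"

definition hall_subgroup :: "('a, 'b) monoid_scheme \<Rightarrow> nat set \<Rightarrow> 'a set \<Rightarrow> bool" where
  "hall_subgroup G \<pi> H \<longleftrightarrow> subgroup H G \<and>
     (\<forall>r. prime r \<and> r dvd card H \<longrightarrow> r \<in> \<pi>) \<and>
     (\<forall>r \<in> \<pi>. \<not> r dvd (card (carrier G) div card H))"

definition sylow_subgroup :: "('a, 'b) monoid_scheme \<Rightarrow> nat \<Rightarrow> 'a set \<Rightarrow> bool" where
  "sylow_subgroup G p P \<longleftrightarrow> subgroup P G \<and>
     card P = p ^ multiplicity p (card (carrier G))"

definition frobenius_group :: "('a, 'b) monoid_scheme \<Rightarrow> 'a set \<Rightarrow> 'a set \<Rightarrow> bool" where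
  "frobenius_group H N K \<longleftrightarrow> group H \<and> N \<lhd> H \<and> subgroup K H \<and>
     N \<noteq> {\<one>\<^bsub>H\<^esub>} \<and> K \<noteq> {\<one>\<^bsub>H\<^esub>} \<and>
     N \<inter> K = {\<one>\<^bsub>H\<^esub>} \<and> N <#>\<^bsub>H\<^esub> K = carrier H \<and>
     (\<forall>k \<in> K - {\<one>\<^bsub>H\<^esub>}. \<forall>n \<in> N. n \<otimes>\<^bsub>H\<^esub> k = k \<otimes>\<^bsub>H\<^esub> n \<longrightarrow> n = \<one>\<^bsub>H\<^esub>)"

definition frobenius_with_kernel :: "('a, 'b) monoid_scheme \<Rightarrow> 'a set \<Rightarrow> bool" where
  "frobenius_with_kernel H N \<longleftrightarrow> (\<exists>K. frobenius_group H N K)"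

definition is_p_power :: "nat \<Rightarrow> nat \<Rightarrow> bool" where
  "is_p_power p m \<longleftrightarrow> (\<exists>k. m = p ^ k)"

definition two_frobenius :: "('a, 'b) monoid_scheme \<Rightarrow> nat \<Rightarrow> nat \<Rightarrow> nat \<Rightarrow> bool" where
  "two_frobenius H p q r \<longleftrightarrow> group H \<and> (\<exists>N M. N \<lhd> H \<and> M \<lhd> H \<and> N \<subseteq> M \<and>
     frobenius_with_kernel (H\<lparr>carrier := M\<rparr>) N \<and>
     frobenius_with_kernel (H Mod N) (rcosets\<^bsub>H\<lparr>carrier := M\<rparr>\<^esub> N) \<and>
     is_p_power p (card N) \<and>
     is_p_power q (card (rcosets\<^bsub>H\<lparr>carrier := M\<rparr>\<^esub> N)) \<and>
     is_p_power r (card (rcosets\<^bsub>H\<^esub> M)))"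

definition frob_kernel_sylow :: "('a, 'b) monoid_scheme \<Rightarrow> 'a set \<Rightarrow> nat \<Rightarrow> nat \<Rightarrow> bool" where
  "frob_kernel_sylow G H p q \<longleftrightarrow> (\<exists>N K. frobenius_group (G\<lparr>carrier := H\<rparr>) N K \<and>
     sylow_subgroup (G\<lparr>carrier := H\<rparr>) q N \<and> sylow_subgroup (G\<lparr>carrier := H\<rparr>) p K)"

end

(* Let P and Q be the orders of the Sylow p- and q-subgroups of G; every Hall {p,q}-subgroup
   has these orders.  The complement of a finite Frobenius group acts freely by conjugation on
   the non-identity elements of the kernel, so its order divides |kernel| - 1.  A Hall subgroup
   of the first kind therefore gives P | Q - 1, or, in the 2-Frobenius case with P = P1 * P2,
   Q | P1 - 1 and P2 | Q - 1; a Hall subgroup of the second kind gives the same with the roles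
   of P and Q exchanged.  Comparing sizes, no pair P, Q satisfies both. *)

theory Submission
  imports Defs "HOL-Algebra.Group_Action"
begin

lemma (in group_action) restricted_action:
  assumes "F \<subseteq> E" and invariant: "\<And>g x. g \<in> carrier G \<Longrightarrow> x \<in> F \<Longrightarrow> \<phi> g x \<in> F"
  shows "group_action G F (\<lambda>g. restrict (\<phi> g) F)"
proof -
  interpret G: group G
    using group_hom group_hom.axioms(1) by blast
  have onto: "F \<subseteq> \<phi> g ` F" if g: "g \<in> carrier G" for g
  proof
    fix x assume x: "x \<in> F"
    have "\<phi> g (\<phi> (inv g) x) = \<phi> \<one> x"
      using composition_rule[of x g "inv g"] x g assms(1) by auto
    also have "\<dots> = x"
      using x assms(1) id_eq_one by (metis restrict_apply' subsetD)
    finally show "x \<in> \<phi> g ` F"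
      using invariant[of "inv g" x] x g by (metis G.inv_closed image_eqI)
  qed
  have Bij: "restrict (\<phi> g) F \<in> Bij F" if g: "g \<in> carrier G" for g
  proof -
    have "inj_on (\<phi> g) F"
      using inj_prop[OF g] assms(1) inj_on_subset by blast
    moreover have "\<phi> g ` F = F"
      using invariant[OF g] onto[OF g] by blast
    ultimately show ?thesis
      unfolding Bij_def bij_betw_def by simp
  qed
  have mult: "restrict (\<phi> (g \<otimes> h)) F = compose F (restrict (\<phi> g) F) (restrict (\<phi> h) F)"
    if "g \<in> carrier G" "h \<in> carrier G" for g h
  proof
    fix x show "restrict (\<phi> (g \<otimes> h)) F x = compose F (restrict (\<phi> g) F) (restrict (\<phi> h) F) x"
      using that assms composition_rule[of x g h] by (auto simp: compose_def)
  qed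
  show ?thesis
    unfolding group_action_def group_hom_def group_hom_axioms_def hom_def
    using Bij mult group_BijGroup[of F] by (simp add: G.is_group BijGroup_def)
qed

lemma (in group_action) order_dvd_card_if_free:
  assumes "finite E" and free: "\<And>g x. g \<in> carrier G \<Longrightarrow> x \<in> E \<Longrightarrow> \<phi> g x = x \<Longrightarrow> g = \<one>"
  shows "order G dvd card E"
proof -
  have card_orbit: "card orb = order G" if orb: "orb \<in> orbits G E \<phi>" for orb
  proof -
    obtain x where x: "x \<in> E" and orb_x: "orb = orbit G \<phi> x"
      using orb unfolding orbits_def by blast
    have "stabilizer G \<phi> x = {\<one>}"
      using free[OF _ x] stabilizer_one_closed[OF x] unfolding stabilizer_def by blast
    then show ?thesis
      using orbit_stabilizer_theorem[OF x] orb_x by simp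
  qed
  have "card E = (\<Sum>orb\<in>orbits G E \<phi>. \<Sum>x\<in>orb. 1::nat)"
    using disjoint_sum[OF \<open>finite E\<close>, of "\<lambda>_. 1::nat"] by simp
  also have "\<dots> = (\<Sum>orb\<in>orbits G E \<phi>. card orb)"
    by simp
  also have "\<dots> = card (orbits G E \<phi>) * order G"
    using card_orbit by simp
  finally show ?thesis
    by simp
qed

lemma (in group) card_set_mult_trivial_inter:
  assumes N: "subgroup N G" and K: "subgroup K G" and NK: "N \<inter> K = {\<one>}"
  shows "card (N <#> K) = card N * card K"
proof -
  have "inj_on (\<lambda>(n, k). n \<otimes> k) (N \<times> K)"
  proof (rule inj_onI, clarify)
    fix n1 k1 n2 k2
    assume n: "n1 \<in> N" "n2 \<in> N" and k: "k1 \<in> K" "k2 \<in> K" and eq: "n1 \<otimes> k1 = n2 \<otimes> k2"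
    have c: "n1 \<in> carrier G" "n2 \<in> carrier G" "k1 \<in> carrier G" "k2 \<in> carrier G"
      using n k N K subgroup.subset by blast+
    have "inv n2 \<otimes> n1 = k2 \<otimes> inv k1"
      using eq c by (metis inv_solve_left inv_solve_right m_assoc m_closed inv_closed)
    moreover have "inv n2 \<otimes> n1 \<in> N" "k2 \<otimes> inv k1 \<in> K"
      using n k N K by (simp_all add: subgroup.m_closed subgroup.m_inv_closed)
    ultimately have "inv n2 \<otimes> n1 = \<one>" "k2 \<otimes> inv k1 = \<one>"
      using NK by auto
    then show "n1 = n2 \<and> k1 = k2"
      using c by (metis inv_equality inv_inv l_inv_ex r_inv_ex inv_closed)
  qed
  moreover have "N <#> K = (\<lambda>(n, k). n \<otimes> k) ` (N \<times> K)"
    unfolding set_mult_def by auto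
  ultimately show ?thesis
    by (simp add: card_image card_cartesian_product)
qed

lemma (in group) subgroup_card_ge_2:
  assumes "subgroup K G" "finite K" "K \<noteq> {\<one>}"
  shows "2 \<le> card K"
proof -
  obtain k where "k \<in> K" "k \<noteq> \<one>"
    using assms subgroup.one_closed by blast
  then have "{\<one>, k} \<subseteq> K"
    using assms subgroup.one_closed by blast
  from card_mono[OF \<open>finite K\<close> this] \<open>k \<noteq> \<one>\<close> show ?thesis
    by simp
qed

lemma frobenius_group_order:
  fixes H (structure)
  assumes "frobenius_group H N K"
  shows "card N * card K = order H"
proof -
  interpret group H
    using assms unfolding frobenius_group_def by blast
  show ?thesis
    using assms card_set_mult_trivial_inter normal_imp_subgroup
    unfolding frobenius_group_def order_def by metis
qed

lemma frobenius_group_card_ge_2: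
  fixes H (structure)
  assumes "frobenius_group H N K" and "finite (carrier H)"
  shows "2 \<le> card N" and "2 \<le> card K"
proof -
  interpret group H
    using assms unfolding frobenius_group_def by blast
  have "subgroup N H" "subgroup K H" "N \<noteq> {\<one>}" "K \<noteq> {\<one>}"
    using assms(1) normal_imp_subgroup unfolding frobenius_group_def by blast+
  then show "2 \<le> card N" "2 \<le> card K"
    using subgroup_card_ge_2 finite_subset[OF subgroup.subset assms(2)] by blast+
qed

lemma (in group) conjugation_action_on_normal_nonidentity:
  assumes "N \<lhd> G" and "subgroup K G"
  shows "group_action (G\<lparr>carrier := K\<rparr>) (N - {\<one>}) (\<lambda>k. \<lambda>n \<in> N - {\<one>}. k \<otimes> n \<otimes> inv k)"
proof -
  have N: "N \<subseteq> carrier G"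
    using assms(1) normal_imp_subgroup subgroup.subset by blast
  have invariant: "k \<otimes> n \<otimes> inv k \<in> N - {\<one>}" if k: "k \<in> K" and n: "n \<in> N - {\<one>}" for k n
  proof -
    have carrier: "k \<in> carrier G" "n \<in> carrier G"
      using k n N assms(2) subgroup.subset by blast+
    have "k \<otimes> n \<otimes> inv k \<in> N"
      using normal.inv_op_closed2[OF assms(1) carrier(1)] n by blast
    moreover have "k \<otimes> n \<otimes> inv k \<noteq> \<one>"
      using n carrier by (auto simp: inv_solve_right')
    ultimately show ?thesis
      by blast
  qed
  have "group_action (G\<lparr>carrier := K\<rparr>) (N - {\<one>})
      (\<lambda>k. restrict (\<lambda>h \<in> carrier G. k \<otimes> h \<otimes> inv k) (N - {\<one>}))"
    using group_action.induced_action[OF action_by_conjugation assms(2)]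
    by (rule group_action.restricted_action) (use N invariant in auto)
  moreover have "(\<lambda>k. restrict (\<lambda>h \<in> carrier G. k \<otimes> h \<otimes> inv k) (N - {\<one>}))
      = (\<lambda>k. \<lambda>n \<in> N - {\<one>}. k \<otimes> n \<otimes> inv k)"
    using N by (auto simp: restrict_def fun_eq_iff)
  ultimately show ?thesis
    by simp
qed

lemma frobenius_complement_dvd_kernel:
  fixes H (structure)
  assumes frob: "frobenius_group H N K" and fin: "finite (carrier H)"
  shows "card K dvd card N - 1"
proof -
  interpret group H
    using frob unfolding frobenius_group_def by blast
  have nN: "N \<lhd> H" and sK: "subgroup K H"
    and fixed_point_free: "\<And>k n. k \<in> K - {\<one>} \<Longrightarrow> n \<in> N \<Longrightarrow> n \<otimes> k = k \<otimes> n \<Longrightarrow> n = \<one>"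
    using frob unfolding frobenius_group_def by blast+
  have N: "N \<subseteq> carrier H" "\<one> \<in> N"
    using nN normal_imp_subgroup subgroup.subset subgroup.one_closed by blast+
  interpret K: group_action "H\<lparr>carrier := K\<rparr>" "N - {\<one>}" "\<lambda>k. \<lambda>n \<in> N - {\<one>}. k \<otimes> n \<otimes> inv k"
    using conjugation_action_on_normal_nonidentity[OF nN sK] .
  have "order (H\<lparr>carrier := K\<rparr>) dvd card (N - {\<one>})"
  proof (rule K.order_dvd_card_if_free)
    show "finite (N - {\<one>})"
      using finite_subset[OF N(1) fin] by blast
  next
    fix k n
    assume k: "k \<in> carrier (H\<lparr>carrier := K\<rparr>)" and n: "n \<in> N - {\<one>}"
      and "(\<lambda>n \<in> N - {\<one>}. k \<otimes> n \<otimes> inv k) n = n"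
    then have conj: "k \<otimes> n \<otimes> inv k = n"
      by simp
    have kc: "k \<in> carrier H" and nc: "n \<in> carrier H"
      using k n N(1) subgroup.subset[OF sK] by auto
    have "k \<otimes> n = n \<otimes> k"
      using inv_solve_right'[of n "k \<otimes> n" k] m_closed[OF kc nc] kc nc conj by blast
    then show "k = \<one>\<^bsub>H\<lparr>carrier := K\<rparr>\<^esub>"
      using fixed_point_free[of k n] k n by auto
  qed
  then show ?thesis
    using N finite_subset[OF N(1) fin] by (simp add: order_def)
qed

lemma hall_subgroup_multiplicity:
  fixes G (structure)
  assumes "group G" and "finite (carrier G)" and hall: "hall_subgroup G \<pi> H"
    and "r \<in> \<pi>" and "prime r"
  shows "multiplicity r (card H) = multiplicity r (order G)"
proof -
  interpret group G by fact
  have sH: "subgroup H G" and not_dvd_index: "\<not> r dvd order G div card H"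
    using hall assms(4) unfolding hall_subgroup_def order_def by auto
  have lagrange: "card (rcosets H) * card H = order G"
    using lagrange[OF sH] .
  have "order G \<noteq> 0"
    using assms(2) by (simp add: order_gt_0_iff_finite)
  then have index: "card (rcosets H) \<noteq> 0" "card H \<noteq> 0"
    using lagrange[symmetric] by simp_all
  have "multiplicity r (order G) = multiplicity r (card (rcosets H)) + multiplicity r (card H)"
    using index \<open>prime r\<close> unfolding lagrange[symmetric]
    by (simp add: prime_elem_multiplicity_mult_distrib)
  moreover have "\<not> r dvd card (rcosets H)"
    using not_dvd_index index unfolding lagrange[symmetric] by simp
  ultimately show ?thesis
    by (simp add: not_dvd_imp_multiplicity_0)
qed

lemma multiplicity_mult_distinct_prime_power:
  fixes p q :: nat
  assumes "prime p" "prime q" "p \<noteq> q"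
  shows "multiplicity p (p ^ i * q ^ j) = i"
  using assms
  by (simp add: prime_elem_multiplicity_mult_distrib multiplicity_distinct_prime_power prime_gt_0_nat)

text \<open>The orders P, Q of the Sylow p- and q-subgroups of a {p,q}-group that is Frobenius with
  kernel of order Q and complement of order P, or 2-Frobenius of type (p,q,p) whose lower and upper
  p-layers have orders P1 and P2.\<close>
definition frobenius_type_orders :: "nat \<Rightarrow> nat \<Rightarrow> bool" where
  "frobenius_type_orders P Q \<longleftrightarrow> (2 \<le> P \<and> P dvd Q - 1) \<or>
     (\<exists>P1 P2. P = P1 * P2 \<and> 2 \<le> P1 \<and> 2 \<le> P2 \<and> Q dvd P1 - 1 \<and> P2 dvd Q - 1)"

lemma dvd_mult_minus_one_cancel:
  fixes P Q1 Q2 :: nat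
  assumes "P dvd Q1 * Q2 - 1" and "P dvd Q1 - 1" and "1 \<le> Q1"
  shows "P dvd Q2 - 1"
proof (cases "Q2 = 0")
  case False
  then have split: "Q1 * Q2 - 1 = Q2 * (Q1 - 1) + (Q2 - 1)"
    using \<open>1 \<le> Q1\<close> by (simp add: algebra_simps diff_mult_distrib2)
  have "P dvd Q2 * (Q1 - 1)"
    using assms(2) by simp
  then show ?thesis
    using assms(1) unfolding split by (simp only: dvd_add_right_iff)
qed simp

lemma frobenius_type_orders_asym:
  assumes "frobenius_type_orders P Q"
  shows "\<not> frobenius_type_orders Q P"
proof
  assume "frobenius_type_orders Q P"
  have mixed_impossible: False
    if "2 \<le> P" "P dvd Q - 1" "Q = Q1 * Q2" "2 \<le> Q1" "2 \<le> Q2" "P dvd Q1 - 1" "Q2 dvd P - 1"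
    for P Q Q1 Q2 :: nat
  proof -
    have "P dvd Q2 - 1"
      using dvd_mult_minus_one_cancel[of P Q1 Q2] that by simp
    then have "P \<le> Q2 - 1" "Q2 \<le> P - 1"
      using that dvd_imp_le by simp_all
    then show False
      using that by linarith
  qed
  show False
    using assms \<open>frobenius_type_orders Q P\<close> unfolding frobenius_type_orders_def
  proof (elim disjE exE conjE)
    assume "2 \<le> P" "P dvd Q - 1" "2 \<le> Q" "Q dvd P - 1"
    then have "P \<le> Q - 1" "Q \<le> P - 1"
      using dvd_imp_le by simp_all
    then show False
      using \<open>2 \<le> P\<close> by linarith
  next
    fix P1 P2 Q1 Q2
    assume "P = P1 * P2" "2 \<le> P1" "2 \<le> P2" "Q dvd P1 - 1"
      and "Q = Q1 * Q2" "2 \<le> Q1" "2 \<le> Q2" "P dvd Q1 - 1"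
    then have "Q \<le> P1 - 1" "P \<le> Q1 - 1" "P1 \<le> P" "Q1 \<le> Q"
      using dvd_imp_le by simp_all
    then show False
      using \<open>2 \<le> P1\<close> by linarith
  qed (use mixed_impossible in blast)+
qed

lemma frob_kernel_sylow_orders:
  fixes G (structure)
  assumes "frob_kernel_sylow G H p q" and "finite H"
  shows "frobenius_type_orders (p ^ multiplicity p (card H)) (q ^ multiplicity q (card H))"
proof -
  obtain N K where frob: "frobenius_group (G\<lparr>carrier := H\<rparr>) N K"
    and "sylow_subgroup (G\<lparr>carrier := H\<rparr>) q N" "sylow_subgroup (G\<lparr>carrier := H\<rparr>) p K"
    using assms(1) unfolding frob_kernel_sylow_def by blast
  then have "card N = q ^ multiplicity q (card H)" "card K = p ^ multiplicity p (card H)"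
    unfolding sylow_subgroup_def by simp_all
  moreover have "card K dvd card N - 1" "2 \<le> card K"
    using frobenius_complement_dvd_kernel[OF frob] frobenius_group_card_ge_2(2)[OF frob] assms(2)
    by simp_all
  ultimately show ?thesis
    unfolding frobenius_type_orders_def by simp
qed

lemma two_frobenius_order_factorization:
  fixes H (structure)
  assumes "two_frobenius H p q p" and fin: "finite (carrier H)"
  obtains x m r where "order H = p ^ r * q ^ m * p ^ x"
    and "2 \<le> p ^ x" and "2 \<le> p ^ r" and "q ^ m dvd p ^ x - 1" and "p ^ r dvd q ^ m - 1"
proof -
  interpret group H
    using assms(1) unfolding two_frobenius_def by blast
  obtain N M where "N \<lhd> H" "M \<lhd> H"
    and frobenius_layers: "frobenius_with_kernel (H\<lparr>carrier := M\<rparr>) N"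
      "frobenius_with_kernel (H Mod N) (rcosets\<^bsub>H\<lparr>carrier := M\<rparr>\<^esub> N)"
    and powers: "is_p_power p (card N)" "is_p_power q (card (rcosets\<^bsub>H\<lparr>carrier := M\<rparr>\<^esub> N))"
      "is_p_power p (card (rcosets M))"
    using assms(1) unfolding two_frobenius_def by blast
  let ?MN = "rcosets\<^bsub>H\<lparr>carrier := M\<rparr>\<^esub> N"
  obtain K K2 where frob_M: "frobenius_group (H\<lparr>carrier := M\<rparr>) N K"
    and frob_quot: "frobenius_group (H Mod N) ?MN K2"
    using frobenius_layers unfolding frobenius_with_kernel_def by blast
  have sN: "subgroup N H" and sM: "subgroup M H"
    using \<open>N \<lhd> H\<close> \<open>M \<lhd> H\<close> normal_imp_subgroup by blast+
  have sN_M: "subgroup N (H\<lparr>carrier := M\<rparr>)"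
    using frob_M normal_imp_subgroup unfolding frobenius_group_def by blast
  have fin_M: "finite (carrier (H\<lparr>carrier := M\<rparr>))"
    using finite_subset[OF subgroup.subset[OF sM] fin] by simp
  have fin_quot: "finite (carrier (H Mod N))"
    using fin rcosets_part_G[OF sN] finite_UnionD unfolding FactGroup_def
    by (metis partial_object.select_convs(1))
  have card_M: "card ?MN * card N = card M"
    using group.lagrange[OF subgroup_imp_group[OF sM] sN_M] by (simp add: order_def)
  have N_ge_2: "2 \<le> card N" and K2_ge_2: "2 \<le> card K2"
    using frobenius_group_card_ge_2(1)[OF frob_M fin_M]
      frobenius_group_card_ge_2(2)[OF frob_quot fin_quot] by simp_all
  have "card N * card K = card N * card ?MN"
    using frobenius_group_order[OF frob_M] card_M by (simp add: order_def mult.commute)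
  then have card_K: "card K = card ?MN"
    using N_ge_2 by simp
  have order_H: "order H = card (rcosets M) * card ?MN * card N"
    using lagrange[OF sM] unfolding card_M[symmetric] by (simp add: mult.assoc)
  have "card K2 * (card ?MN * card N) = card (rcosets M) * (card ?MN * card N)"
    using frobenius_group_order[OF frob_quot] lagrange[OF sN] order_H
    by (simp add: order_def FactGroup_def ac_simps)
  moreover have "card ?MN \<noteq> 0"
    using card_K frobenius_group_card_ge_2(2)[OF frob_M fin_M] by simp
  ultimately have card_K2: "card K2 = card (rcosets M)"
    using N_ge_2 by simp
  obtain x m r where "card N = p ^ x" "card ?MN = q ^ m" "card (rcosets M) = p ^ r"
    using powers unfolding is_p_power_def by blast
  then show ?thesis
    by (intro that)
      (use order_H N_ge_2 K2_ge_2 card_K card_K2 frobenius_complement_dvd_kernel[OF frob_M fin_M]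
        frobenius_complement_dvd_kernel[OF frob_quot fin_quot] in simp_all)
qed

lemma two_frobenius_orders:
  fixes H (structure)
  assumes "two_frobenius H p q p" and "finite (carrier H)"
    and "prime p" and "prime q" and "p \<noteq> q"
  shows "frobenius_type_orders (p ^ multiplicity p (order H)) (q ^ multiplicity q (order H))"
proof -
  obtain x m r where order_H: "order H = p ^ r * q ^ m * p ^ x"
    and "2 \<le> p ^ x" "2 \<le> p ^ r" "q ^ m dvd p ^ x - 1" "p ^ r dvd q ^ m - 1"
    using two_frobenius_order_factorization[OF assms(1,2)] .
  then have "order H = p ^ (x + r) * q ^ m"
    by (simp add: power_add ac_simps)
  then have "multiplicity p (order H) = x + r" "multiplicity q (order H) = m"
    using multiplicity_mult_distinct_prime_power[of p q "x + r" m]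
      multiplicity_mult_distinct_prime_power[of q p m "x + r"] assms(3-5)
    by (simp_all add: mult.commute)
  then show ?thesis
    unfolding frobenius_type_orders_def
    using \<open>2 \<le> p ^ x\<close> \<open>2 \<le> p ^ r\<close> \<open>q ^ m dvd p ^ x - 1\<close> \<open>p ^ r dvd q ^ m - 1\<close>
    by (intro disjI2 exI[of _ "p ^ x"] exI[of _ "p ^ r"]) (simp add: power_add)
qed

lemma hall_subgroup_frobenius_type_orders:
  fixes G (structure)
  assumes "group G" and "finite (carrier G)" and "prime p" "prime q" "p \<noteq> q"
    and hall: "hall_subgroup G {p, q} H"
    and "frob_kernel_sylow G H p q \<or> two_frobenius (G\<lparr>carrier := H\<rparr>) p q p"
  shows "frobenius_type_orders (p ^ multiplicity p (order G)) (q ^ multiplicity q (order G))"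
proof -
  have "finite H"
    using hall assms(2) finite_subset subgroup.subset unfolding hall_subgroup_def by metis
  then have "frobenius_type_orders (p ^ multiplicity p (card H)) (q ^ multiplicity q (card H))"
    using assms(3-5,7) frob_kernel_sylow_orders two_frobenius_orders[of "G\<lparr>carrier := H\<rparr>" p q]
    by (auto simp: order_def)
  moreover have "multiplicity p (card H) = multiplicity p (order G)"
    "multiplicity q (card H) = multiplicity q (order G)"
    using hall_subgroup_multiplicity[OF assms(1,2) hall] assms(3,4) by simp_all
  ultimately show ?thesis
    by simp
qed

theorem mainTheorem5:
  fixes G :: "('a, 'b) monoid_scheme" and p q :: nat
  assumes "group G" and "finite (carrier G)"
    and "prime p" and "prime q" and "p \<noteq> q"
    and "p dvd order G" and "q dvd order G"
    and "\<not> codegree_adjacent G p q"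
  shows "\<not> (\<exists>H1 H2.
            hall_subgroup G {p, q} H1 \<and>
            (frob_kernel_sylow G H1 p q \<or> two_frobenius (G\<lparr>carrier := H1\<rparr>) p q p) \<and>
            hall_subgroup G {p, q} H2 \<and>
            (frob_kernel_sylow G H2 q p \<or> two_frobenius (G\<lparr>carrier := H2\<rparr>) q p q))"
proof
  assume "\<exists>H1 H2.
            hall_subgroup G {p, q} H1 \<and>
            (frob_kernel_sylow G H1 p q \<or> two_frobenius (G\<lparr>carrier := H1\<rparr>) p q p) \<and>
            hall_subgroup G {p, q} H2 \<and>
            (frob_kernel_sylow G H2 q p \<or> two_frobenius (G\<lparr>carrier := H2\<rparr>) q p q)"
  then obtain H1 H2 where hall1: "hall_subgroup G {p, q} H1"
    and H1: "frob_kernel_sylow G H1 p q \<or> two_frobenius (G\<lparr>carrier := H1\<rparr>) p q p"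
    and hall2: "hall_subgroup G {q, p} H2"
    and H2: "frob_kernel_sylow G H2 q p \<or> two_frobenius (G\<lparr>carrier := H2\<rparr>) q p q"
    by (auto simp: insert_commute)
  have "frobenius_type_orders (p ^ multiplicity p (order G)) (q ^ multiplicity q (order G))"
    using hall_subgroup_frobenius_type_orders[OF assms(1-5) hall1 H1] .
  moreover have "frobenius_type_orders (q ^ multiplicity q (order G)) (p ^ multiplicity p (order G))"
    using hall_subgroup_frobenius_type_orders[OF assms(1,2,4,3) _ hall2 H2] assms(5) by simp
  ultimately show False
    using frobenius_type_orders_asym by blast
qed

end
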